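(* Let $A$ be a finite interval of integers and let $G$ be a signed digraph on $[n]$. If $G$ admits a nilpotent function over $A$, then for every initial strong component $I$ of $G$, the induced signed subgraph $G[I]$ admits a nilpotent function over $A$. Conversely, if every initial strong component $I$ of $G$ is such that $G[I]$ admits a nilpotent function over $A$, and moreover either $|A|\geq 3$, or $|A|=2$ and every unsigned arc of $G$ has both endpoints in the same initial strong component of $G$, then $G$ admits a nilpotent function over $A$.
   Context: A signed digraph is a digraph (loops allowed, no multiple arcs) in which each arc is labeled positive, negative, or null (unsigned). For a finite interval of integers $A$ and a finite vertex set $V$, a function over $A$ on $V$ is a map $f:A^V\to A^V$; $f^0=\mathrm{id}$, $f^k=f\circ f^{k-1}$. Its interaction graph $G(f)$ is the signed digraph on $V$ with an arc $(j,i)$ iff $f_i(a)\neq f_i(b)$ for some $a,b$ with $a_j<b_j$ and $a_\ell=b_\ell$ for $\ell\neq j$; such an arc is positive if $f_i(a)\leq f_i(b)$ for all such pairs, negative if $f_i(a)\geq f_i(b)$ for all such pairs, and null otherwise. A signed digraph $G$ admits $f$ if $G(f)=G$. $f$ is nilpotent if $f^k$ is constant for some $k$. A strong component of $G$ is a strongly connected component; it is initial if there is no arc $(u,v)$ of $G$ with $u\notin I$ and $v\in I$. $G[I]$ denotes the subgraph induced by $I$ (with inherited signs). *)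

theory Defs
  imports "HOL-Library.FuncSet"
begin

datatype sign = Pos | Neg | Null

text \<open>A signed digraph on vertex set V: a partial arc labelling
  G :: 'v \<times> 'v \<Rightarrow> sign option, where G (j,i) = Some s means there is an arc (j,i)
  with sign s (loops allowed, no multiple arcs).\<close>

definition signed_digraph :: "'v set \<Rightarrow> ('v \<times> 'v \<Rightarrow> sign option) \<Rightarrow> bool" where
  "signed_digraph V G \<longleftrightarrow> dom G \<subseteq> V \<times> V"

definition arcs :: "('v \<times> 'v \<Rightarrow> sign option) \<Rightarrow> ('v \<times> 'v) set" where
  "arcs G = dom G"

definition confs :: "'v set \<Rightarrow> int set \<Rightarrow> ('v \<Rightarrow> int) set" where
  "confs V A = PiE V (\<lambda>_. A)"

definition is_fun_over :: "'v set \<Rightarrow> int set \<Rightarrow> (('v \<Rightarrow> int) \<Rightarrow> ('v \<Rightarrow> int)) \<Rightarrow> bool" where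
  "is_fun_over V A f \<longleftrightarrow> f \<in> confs V A \<rightarrow> confs V A"

definition jpairs :: "'v set \<Rightarrow> int set \<Rightarrow> 'v \<Rightarrow> (('v \<Rightarrow> int) \<times> ('v \<Rightarrow> int)) set" where
  "jpairs V A j = {(a, b). a \<in> confs V A \<and> b \<in> confs V A \<and> a j < b j \<and>
                           (\<forall>l\<in>V. l \<noteq> j \<longrightarrow> a l = b l)}"

definition interaction_graph ::
  "'v set \<Rightarrow> int set \<Rightarrow> (('v \<Rightarrow> int) \<Rightarrow> ('v \<Rightarrow> int)) \<Rightarrow> ('v \<times> 'v \<Rightarrow> sign option)" where
  "interaction_graph V A f = (\<lambda>(j, i).
     if j \<in> V \<and> i \<in> V \<and> (\<exists>(a, b) \<in> jpairs V A j. f a i \<noteq> f b i) then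
       (if \<forall>(a, b) \<in> jpairs V A j. f a i \<le> f b i then Some Pos
        else if \<forall>(a, b) \<in> jpairs V A j. f a i \<ge> f b i then Some Neg
        else Some Null)
     else None)"

definition nilpotent :: "'v set \<Rightarrow> int set \<Rightarrow> (('v \<Rightarrow> int) \<Rightarrow> ('v \<Rightarrow> int)) \<Rightarrow> bool" where
  "nilpotent V A f \<longleftrightarrow> (\<exists>k c. \<forall>x \<in> confs V A. (f ^^ k) x = c)"

definition admits :: "'v set \<Rightarrow> int set \<Rightarrow> ('v \<times> 'v \<Rightarrow> sign option)
    \<Rightarrow> (('v \<Rightarrow> int) \<Rightarrow> ('v \<Rightarrow> int)) \<Rightarrow> bool" where
  "admits V A G f \<longleftrightarrow> is_fun_over V A f \<and> interaction_graph V A f = G"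

definition admits_nilpotent :: "'v set \<Rightarrow> int set \<Rightarrow> ('v \<times> 'v \<Rightarrow> sign option) \<Rightarrow> bool" where
  "admits_nilpotent V A G \<longleftrightarrow> (\<exists>f. admits V A G f \<and> nilpotent V A f)"

definition strong_component :: "'v set \<Rightarrow> ('v \<times> 'v \<Rightarrow> sign option) \<Rightarrow> 'v set \<Rightarrow> bool" where
  "strong_component V G I \<longleftrightarrow>
     (\<exists>u\<in>V. I = {v \<in> V. (u, v) \<in> (arcs G)\<^sup>* \<and> (v, u) \<in> (arcs G)\<^sup>*})"

definition initial_strong_component :: "'v set \<Rightarrow> ('v \<times> 'v \<Rightarrow> sign option) \<Rightarrow> 'v set \<Rightarrow> bool" where
  "initial_strong_component V G I \<longleftrightarrow> strong_component V G I \<and>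
     (\<forall>(u, v) \<in> arcs G. u \<notin> I \<longrightarrow> v \<notin> I)"

definition induced :: "('v \<times> 'v \<Rightarrow> sign option) \<Rightarrow> 'v set \<Rightarrow> ('v \<times> 'v \<Rightarrow> sign option)" where
  "induced G I = (\<lambda>e. if e \<in> I \<times> I then G e else None)"

end

theory Submission
  imports Defs
begin

text \<open>
  Forward direction: an initial strong component \<open>I\<close> receives no arcs from outside, so the
  coordinates in \<open>I\<close> of a nilpotent \<open>f\<close> evolve on their own; fixing the other coordinates
  arbitrarily gives a nilpotent function on \<open>I\<close> whose interaction graph is \<open>G[I]\<close>.

  Converse: every vertex is reachable from an initial component, so the vertices outside the
  initial components carry a shortest-path forest rooted in them. Run the given nilpotent
  functions on the initial components; every other vertex \<open>v\<close> becomes a conjunction gate over its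
  in-neighbours, one test per arc, each test chosen so that the gate has the prescribed sign in
  that coordinate, and the test of the forest parent of \<open>v\<close> fails at the value on which the parent
  eventually settles. Hence \<open>v\<close> settles one step after its parent. A null arc needs a
  non-monotone test, i.e. three values; this is why for \<open>|A| = 2\<close> null arcs must lie inside
  initial components, where the given functions take care of them.
\<close>

lemma confs_mem: "x \<in> confs V A \<Longrightarrow> v \<in> V \<Longrightarrow> x v \<in> A"
  unfolding confs_def by (rule PiE_mem)

lemma confs_ext: "x \<in> confs V A \<Longrightarrow> y \<in> confs V A \<Longrightarrow> (\<And>v. v \<in> V \<Longrightarrow> x v = y v) \<Longrightarrow> x = y"
  unfolding confs_def by (rule PiE_ext)

lemma restrict_in_confs: "I \<subseteq> V \<Longrightarrow> x \<in> confs V A \<Longrightarrow> restrict x I \<in> confs I A"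
  unfolding confs_def by auto

section \<open>Signs of arcs and conjunction gates\<close>

definition arc_sign :: "bool \<Rightarrow> bool \<Rightarrow> bool \<Rightarrow> sign option" where
  "arc_sign const incr decr =
     (if const then None else if incr then Some Pos else if decr then Some Neg else Some Null)"

definition coord_rel :: "'v set \<Rightarrow> int set \<Rightarrow> (('v \<Rightarrow> int) \<Rightarrow> ('v \<Rightarrow> int)) \<Rightarrow> 'v \<Rightarrow> 'v
    \<Rightarrow> (int \<Rightarrow> int \<Rightarrow> bool) \<Rightarrow> bool" where
  "coord_rel V A f j i R \<longleftrightarrow> (\<forall>(a, b) \<in> jpairs V A j. R (f a i) (f b i))"

lemma interaction_graph_arc_sign:
  "interaction_graph V A f (j, i) =
     (if j \<in> V \<and> i \<in> V then arc_sign (coord_rel V A f j i (=)) (coord_rel V A f j i (\<le>))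
        (coord_rel V A f j i (\<ge>)) else None)"
  unfolding interaction_graph_def coord_rel_def arc_sign_def by auto

definition sign_of :: "int set \<Rightarrow> (int \<Rightarrow> int) \<Rightarrow> sign option" where
  "sign_of A g = arc_sign (monotone_on A (<) (=) g) (monotone_on A (<) (\<le>) g) (monotone_on A (<) (\<ge>) g)"

lemma sign_of_threshold:
  assumes "lo \<le> t" "t < hi" "H \<noteq> L"
  shows "sign_of {lo..hi} (\<lambda>y. if t < y then H else L) = Some (if L < H then Pos else Neg)"
proof -
  have jump: "t \<in> {lo..hi}" "t + 1 \<in> {lo..hi}" "t < t + 1"
    using assms by auto
  let ?g = "\<lambda>y. if t < y then H else L"
  have not_const: "\<not> monotone_on {lo..hi} (<) (=) ?g"
    using jump assms unfolding monotone_on_def by fastforce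
  show ?thesis
  proof (cases "L < H")
    case True
    then have "monotone_on {lo..hi} (<) (\<le>) ?g"
      by (auto simp: monotone_on_def)
    with True not_const show ?thesis
      by (simp add: sign_of_def arc_sign_def)
  next
    case False
    with assms have "\<not> monotone_on {lo..hi} (<) (\<le>) ?g" "monotone_on {lo..hi} (<) (\<ge>) ?g"
      using jump unfolding monotone_on_def by fastforce+
    with False not_const show ?thesis
      by (simp add: sign_of_def arc_sign_def)
  qed
qed

lemma sign_of_zigzag:
  assumes "x \<in> A" "y \<in> A" "z \<in> A" "x < y" "y < z"
    and "g y < g x \<and> g y < g z \<or> g x < g y \<and> g z < g y"
  shows "sign_of A g = Some Null"
  using assms monotone_onD[of A "(<)" _ g x y] monotone_onD[of A "(<)" _ g y z]
  unfolding sign_of_def arc_sign_def by fastforce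

lemma coord_rel_conjunction_gate_imp_monotone:
  assumes f: "\<forall>x\<in>confs V A. f x i = out (\<forall>w\<in>N. P w (x w))"
    and N: "N \<subseteq> V" "j \<in> N" and sat: "\<forall>w\<in>N. \<exists>z\<in>A. P w z"
    and rel: "coord_rel V A f j i R"
  shows "monotone_on A (<) R (\<lambda>y. out (P j y))"
proof -
  have "\<exists>z. z \<in> A \<and> (w \<in> N \<longrightarrow> P w z)" for w
    using sat N(2) by (cases "w \<in> N") auto
  then obtain pick where pick: "\<And>w. pick w \<in> A \<and> (w \<in> N \<longrightarrow> P w (pick w))"
    by metis
  define a0 where "a0 = restrict pick V"
  have a0_upd: "a0(j := y) \<in> confs V A" if "y \<in> A" for y
    using that pick N unfolding a0_def confs_def by (auto simp: PiE_iff extensional_def)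
  have gate_upd: "f (a0(j := y)) i = out (P j y)" if "y \<in> A" for y
  proof -
    have "(\<forall>w\<in>N. P w ((a0(j := y)) w)) = P j y"
      using pick N unfolding a0_def by auto
    with f a0_upd[OF that] show ?thesis
      by simp
  qed
  show ?thesis
  proof (rule monotone_onI)
    fix x y assume xy: "x \<in> A" "y \<in> A" "x < y"
    then have "(a0(j := x), a0(j := y)) \<in> jpairs V A j"
      using a0_upd unfolding jpairs_def by auto
    with rel xy show "R (out (P j x)) (out (P j y))"
      unfolding coord_rel_def by (auto simp: gate_upd)
  qed
qed

lemma monotone_imp_coord_rel_conjunction_gate:
  assumes f: "\<forall>x\<in>confs V A. f x i = out (\<forall>w\<in>N. P w (x w))"
    and N: "N \<subseteq> V" "j \<in> N" and refl: "reflp R" and mono: "monotone_on A (<) R (\<lambda>y. out (P j y))"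
  shows "coord_rel V A f j i R"
  unfolding coord_rel_def
proof clarify
  fix a b assume ab: "(a, b) \<in> jpairs V A j"
  then have confs: "a \<in> confs V A" "b \<in> confs V A" and "a j < b j"
    and others: "\<forall>w\<in>N - {j}. a w = b w"
    using N unfolding jpairs_def by auto
  have "a j \<in> A" "b j \<in> A"
    using confs N by (auto intro: confs_mem)
  with \<open>a j < b j\<close> mono have step: "R (out (P j (a j))) (out (P j (b j)))"
    by (auto dest: monotone_onD)
  have split: "(\<forall>w\<in>N. P w (x w)) \<longleftrightarrow> P j (x j) \<and> (\<forall>w\<in>N - {j}. P w (x w))" for x
    using N(2) by blast
  define rest where "rest \<longleftrightarrow> (\<forall>w\<in>N - {j}. P w (a w))"
  have "rest \<longleftrightarrow> (\<forall>w\<in>N - {j}. P w (b w))"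
    using others unfolding rest_def by auto
  then have "f a i = out (P j (a j) \<and> rest)" "f b i = out (P j (b j) \<and> rest)"
    using f confs split[of a] split[of b] unfolding rest_def by auto
  with step refl show "R (f a i) (f b i)"
    unfolding reflp_def by (cases rest) auto
qed

lemma interaction_graph_conjunction_gate:
  assumes f: "\<forall>x\<in>confs V A. f x i = out (\<forall>w\<in>N. P w (x w))"
    and N: "N \<subseteq> V" and ij: "j \<in> V" "i \<in> V" and sat: "\<forall>w\<in>N. \<exists>z\<in>A. P w z"
  shows "interaction_graph V A f (j, i) = (if j \<in> N then sign_of A (\<lambda>y. out (P j y)) else None)"
proof (cases "j \<in> N")
  case True
  have gate: "coord_rel V A f j i R \<longleftrightarrow> monotone_on A (<) R (\<lambda>y. out (P j y))" if "reflp R" for R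
    using coord_rel_conjunction_gate_imp_monotone[where f = f and out = out and P = P, OF f N True sat]
      monotone_imp_coord_rel_conjunction_gate[where f = f and out = out and P = P, OF f N True that]
    by blast
  show ?thesis
    using True ij gate[of "(=)"] gate[of "(\<le>)"] gate[of "(\<ge>)"]
    by (simp add: interaction_graph_arc_sign sign_of_def reflp_def)
next
  case False
  have "coord_rel V A f j i (=)"
    unfolding coord_rel_def
  proof clarify
    fix a b assume "(a, b) \<in> jpairs V A j"
    then have "a \<in> confs V A" "b \<in> confs V A" "\<forall>w\<in>N. a w = b w"
      using False N unfolding jpairs_def by auto
    with f show "f a i = f b i"
      by simp
  qed
  with False ij show ?thesis
    by (simp add: interaction_graph_arc_sign arc_sign_def)
qed

text \<open>
  In a gate (see \<open>gate\<close> below) the test for an arc of sign \<open>s\<close> is \<open>arc_test lo hi s up e\<close>,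
  where \<open>e\<close> is the value on which the forest parent settles and \<open>up\<close> says whether the gate
  outputs \<open>hi\<close> when all tests pass. The test is an upper set when \<open>(s = Pos) = up\<close>, a lower set
  otherwise, and a non-monotone set, which needs \<open>lo + 1 < hi\<close>, for a null arc. It avoids \<open>e\<close>
  whenever its direction allows it; choosing \<open>up \<longleftrightarrow> (s = Pos) = (e < hi)\<close> for the parent's arc
  makes it always allow it, so the parent's test fails once the parent has settled.
\<close>

definition arc_test :: "int \<Rightarrow> int \<Rightarrow> sign \<Rightarrow> bool \<Rightarrow> int \<Rightarrow> int \<Rightarrow> bool" where
  "arc_test lo hi s up e y =
     (if s = Null then (if lo < e \<and> e < hi then y = lo \<or> y = hi else y = lo + 1)
      else if (s = Pos) = up then min e (hi - 1) < y else y < max e (lo + 1))"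

lemma arc_test_satisfiable:
  assumes "lo < hi"
  shows "\<exists>y\<in>{lo..hi}. arc_test lo hi s up e y"
proof (cases "s = Null")
  case True
  with assms show ?thesis
    unfolding arc_test_def by (cases "lo < e \<and> e < hi") (auto intro: bexI[of _ lo] bexI[of _ "lo + 1"])
next
  case False
  with assms show ?thesis
    unfolding arc_test_def by (cases "(s = Pos) = up") (auto intro: bexI[of _ lo] bexI[of _ hi])
qed

lemma arc_test_fails_at_parent:
  assumes "lo < hi" "e \<in> {lo..hi}" "s = Null \<Longrightarrow> lo + 1 < hi"
  shows "\<not> arc_test lo hi s ((s = Pos) = (e < hi)) e e"
  using assms unfolding arc_test_def by auto

lemma sign_of_arc_test:
  assumes lo_hi: "lo < hi" and e: "e \<in> {lo..hi}" and null: "s = Null \<Longrightarrow> lo + 1 < hi"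
  shows "sign_of {lo..hi} (\<lambda>y. if arc_test lo hi s up e y = up then hi else lo) = Some s"
proof -
  consider "s = Null" | "s \<noteq> Null" "(s = Pos) = up" | "s \<noteq> Null" "(s = Pos) \<noteq> up"
    by blast
  then show ?thesis
  proof cases
    case 1
    with null lo_hi e have "sign_of {lo..hi} (\<lambda>y. if arc_test lo hi s up e y = up then hi else lo) = Some Null"
      by (intro sign_of_zigzag[where x = lo and y = "lo + 1" and z = hi]) (auto simp: arc_test_def)
    with 1 show ?thesis
      by simp
  next
    case 2
    let ?t = "min e (hi - 1)"
    have "(\<lambda>y. if arc_test lo hi s up e y = up then hi else lo)
        = (\<lambda>y. if ?t < y then (if up then hi else lo) else (if up then lo else hi))"
      using 2 by (auto simp: arc_test_def)
    moreover have "sign_of {lo..hi} (\<lambda>y. if ?t < y then (if up then hi else lo) else (if up then lo else hi))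
        = Some (if up then Pos else Neg)"
      using lo_hi e by (subst sign_of_threshold) auto
    ultimately show ?thesis
      using 2 by (cases s) auto
  next
    case 3
    let ?t = "max e (lo + 1) - 1"
    have "(\<lambda>y. if arc_test lo hi s up e y = up then hi else lo)
        = (\<lambda>y. if ?t < y then (if up then lo else hi) else (if up then hi else lo))"
      using 3 by (auto simp: arc_test_def)
    moreover have "sign_of {lo..hi} (\<lambda>y. if ?t < y then (if up then lo else hi) else (if up then hi else lo))
        = Some (if up then Neg else Pos)"
      using lo_hi e by (subst sign_of_threshold) auto
    ultimately show ?thesis
      using 3 by (cases s) auto
  qed
qed

definition gate ::
  "int \<Rightarrow> int \<Rightarrow> ('v \<times> 'v \<Rightarrow> sign option) \<Rightarrow> 'v \<Rightarrow> bool \<Rightarrow> int \<Rightarrow> ('v \<Rightarrow> int) \<Rightarrow> int" where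
  "gate lo hi G i up e x =
     (if (\<forall>w\<in>{w. G (w, i) \<noteq> None}. arc_test lo hi (the (G (w, i))) up e (x w)) = up then hi else lo)"

lemma interaction_graph_gate:
  assumes lo_hi: "lo < hi" and e: "e \<in> {lo..hi}" and G: "signed_digraph V G" and i: "i \<in> V"
    and null: "\<And>w. G (w, i) = Some Null \<Longrightarrow> lo + 1 < hi"
    and f: "\<forall>x\<in>confs V {lo..hi}. f x i = gate lo hi G i up e x"
  shows "interaction_graph V {lo..hi} f (j, i) = G (j, i)"
proof (cases "j \<in> V")
  case True
  have "interaction_graph V {lo..hi} f (j, i)
      = (if j \<in> {w. G (w, i) \<noteq> None}
         then sign_of {lo..hi} (\<lambda>y. if arc_test lo hi (the (G (j, i))) up e y = up then hi else lo)
         else None)"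
    using f G True i arc_test_satisfiable[OF lo_hi]
    by (intro interaction_graph_conjunction_gate) (auto simp: gate_def signed_digraph_def)
  with null show ?thesis
    by (cases "G (j, i)") (auto intro!: sign_of_arc_test[OF lo_hi e])
next
  case False
  with G have "G (j, i) = None"
    unfolding signed_digraph_def by blast
  with False show ?thesis
    by (simp add: interaction_graph_def)
qed

section \<open>Restriction to a set of coordinates\<close>

definition extend_conf :: "'v set \<Rightarrow> 'v set \<Rightarrow> int \<Rightarrow> ('v \<Rightarrow> int) \<Rightarrow> ('v \<Rightarrow> int)" where
  "extend_conf V I z y = (\<lambda>v. if v \<in> I then y v else if v \<in> V then z else undefined)"

lemma extend_conf_in_confs:
  "I \<subseteq> V \<Longrightarrow> z \<in> A \<Longrightarrow> y \<in> confs I A \<Longrightarrow> extend_conf V I z y \<in> confs V A"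
  unfolding extend_conf_def confs_def by (auto simp: PiE_iff extensional_def)

lemma restrict_extend_conf: "y \<in> confs I A \<Longrightarrow> restrict (extend_conf V I z y) I = y"
  unfolding extend_conf_def confs_def by (auto simp: PiE_iff extensional_def)

lemma coord_rel_restrict:
  assumes I: "I \<subseteq> V" "j \<in> I" and z: "z \<in> A"
    and f: "\<forall>x\<in>confs V A. f x i = h (restrict x I) i"
  shows "coord_rel V A f j i R \<longleftrightarrow> coord_rel I A h j i R"
proof
  assume rel: "coord_rel V A f j i R"
  show "coord_rel I A h j i R"
    unfolding coord_rel_def
  proof clarify
    fix a b assume ab: "(a, b) \<in> jpairs I A j"
    then have confs: "a \<in> confs I A" "b \<in> confs I A"
      unfolding jpairs_def by auto
    have "(extend_conf V I z a, extend_conf V I z b) \<in> jpairs V A j"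
      using ab I z extend_conf_in_confs unfolding jpairs_def by (auto simp: extend_conf_def)
    with rel have "R (f (extend_conf V I z a) i) (f (extend_conf V I z b) i)"
      unfolding coord_rel_def by auto
    then show "R (h a i) (h b i)"
      using f confs I z by (simp add: extend_conf_in_confs restrict_extend_conf)
  qed
next
  assume rel: "coord_rel I A h j i R"
  show "coord_rel V A f j i R"
    unfolding coord_rel_def
  proof clarify
    fix a b assume ab: "(a, b) \<in> jpairs V A j"
    then have "(restrict a I, restrict b I) \<in> jpairs I A j"
      using I restrict_in_confs unfolding jpairs_def by auto
    with rel have "R (h (restrict a I) i) (h (restrict b I) i)"
      unfolding coord_rel_def by auto
    with f ab show "R (f a i) (f b i)"
      unfolding jpairs_def by auto
  qed
qed

lemma interaction_graph_restrict:
  assumes "I \<subseteq> V" "j \<in> I" "i \<in> I" "z \<in> A"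
    and "\<forall>x\<in>confs V A. f x i = h (restrict x I) i"
  shows "interaction_graph V A f (j, i) = interaction_graph I A h (j, i)"
  using assms coord_rel_restrict[where f = f and h = h and i = i, OF assms(1,2,4,5)] by (auto simp: interaction_graph_arc_sign)

lemma interaction_graph_None_if_local:
  assumes "I \<subseteq> V" "j \<notin> I"
    and local: "\<And>x y. x \<in> confs V A \<Longrightarrow> y \<in> confs V A \<Longrightarrow> \<forall>v\<in>I. x v = y v \<Longrightarrow> f x i = f y i"
  shows "interaction_graph V A f (j, i) = None"
proof -
  have "f a i = f b i" if "(a, b) \<in> jpairs V A j" for a b
    using that assms unfolding jpairs_def by (intro local) auto
  then show ?thesis
    unfolding interaction_graph_def by auto
qed

lemma interaction_graph_None_update:
  assumes none: "interaction_graph V A f (j, i) = None" and "j \<in> V" "i \<in> V"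
    and x: "x \<in> confs V A" and z: "z \<in> A"
  shows "f (x(j := z)) i = f x i"
proof -
  have upd: "x(j := z) \<in> confs V A"
    using x z \<open>j \<in> V\<close> unfolding confs_def by (auto simp: PiE_iff extensional_def)
  have "f a i = f b i" if "(a, b) \<in> jpairs V A j" for a b
    using none that \<open>j \<in> V\<close> \<open>i \<in> V\<close> unfolding interaction_graph_def by (auto split: if_splits)
  moreover have "(x, x(j := z)) \<in> jpairs V A j" if "x j < z"
    using that x upd unfolding jpairs_def by auto
  moreover have "(x(j := z), x) \<in> jpairs V A j" if "z < x j"
    using that x upd unfolding jpairs_def by auto
  ultimately show ?thesis
    by (cases "x j" z rule: linorder_cases) (auto simp: fun_upd_idem)
qed

lemma eq_if_agree_on_in_neighbours:
  assumes "finite V" "i \<in> V" and none: "\<And>j. j \<in> V - I \<Longrightarrow> interaction_graph V A f (j, i) = None"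
    and x: "x \<in> confs V A" and y: "y \<in> confs V A" and agree: "\<forall>v\<in>I. x v = y v"
  shows "f x i = f y i"
proof -
  have "f x i = f y i" if "finite D" "D \<subseteq> V - I" "x \<in> confs V A" "\<forall>v\<in>V - D. x v = y v" for D x
    using that
  proof (induction D arbitrary: x rule: finite_induct)
    case empty
    with y have "x = y"
      by (auto intro: confs_ext)
    then show ?case
      by simp
  next
    case (insert d D)
    have d: "d \<in> V" "y d \<in> A"
      using y insert.prems(1) unfolding confs_def by auto
    have "f (x(d := y d)) i = f x i"
      using none insert.prems(1,2) d \<open>i \<in> V\<close> by (intro interaction_graph_None_update) auto
    moreover have "x(d := y d) \<in> confs V A"
      using insert.prems(2) d unfolding confs_def by (auto simp: PiE_iff extensional_def)
    moreover have "\<forall>v\<in>V - D. (x(d := y d)) v = y v"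
      using insert.prems(3) by auto
    ultimately show ?case
      using insert.prems(1) insert.IH by auto
  qed
  from this[of "V - I" x] assms show ?thesis
    by blast
qed

lemma interaction_graph_initial_component:
  assumes I: "I \<subseteq> V" "i \<in> I" and z: "z \<in> A"
    and f: "\<forall>x\<in>confs V A. f x i = h (restrict x I) i"
    and h: "interaction_graph I A h = induced G I" and initial: "\<forall>(u, v) \<in> arcs G. u \<notin> I \<longrightarrow> v \<notin> I"
  shows "interaction_graph V A f (j, i) = G (j, i)"
proof (cases "j \<in> I")
  case True
  then have "interaction_graph V A f (j, i) = interaction_graph I A h (j, i)"
    using I z f by (intro interaction_graph_restrict)
  with True I h show ?thesis
    by (simp add: induced_def)
next
  case False
  then have "G (j, i) = None"
    using initial I unfolding arcs_def by auto
  moreover have "interaction_graph V A f (j, i) = None"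
  proof (rule interaction_graph_None_if_local[OF I(1) False])
    fix x y assume "x \<in> confs V A" "y \<in> confs V A" "\<forall>v\<in>I. x v = y v"
    then show "f x i = f y i"
      using f by (metis restrict_ext)
  qed
  ultimately show ?thesis
    by simp
qed

section \<open>Iteration\<close>

lemma funpow_in_confs: "is_fun_over V A f \<Longrightarrow> x \<in> confs V A \<Longrightarrow> (f ^^ m) x \<in> confs V A"
  unfolding is_fun_over_def by (induction m) auto

lemma restrict_funpow:
  assumes f: "is_fun_over V A f" and h: "\<forall>x\<in>confs V A. restrict (f x) I = h (restrict x I)"
    and x: "x \<in> confs V A"
  shows "restrict ((f ^^ m) x) I = (h ^^ m) (restrict x I)"
proof (induction m)
  case (Suc m)
  have "restrict ((f ^^ Suc m) x) I = h (restrict ((f ^^ m) x) I)"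
    using bspec[OF h funpow_in_confs[OF f x]] by (simp only: funpow.simps o_apply)
  with Suc.IH show ?case
    by (simp only: funpow.simps o_apply)
qed simp

lemma confs_nonempty: "A \<noteq> {} \<Longrightarrow> confs V A \<noteq> {}"
  unfolding confs_def by (simp add: PiE_eq_empty_iff)

lemma nilpotent_eventually_constant:
  assumes f: "is_fun_over V A f" and nil: "nilpotent V A f" and A: "A \<noteq> {}"
  shows "\<exists>k c. c \<in> confs V A \<and> (\<forall>t\<ge>k. \<forall>x\<in>confs V A. (f ^^ t) x = c)"
proof -
  obtain k c where kc: "\<forall>x\<in>confs V A. (f ^^ k) x = c"
    using nil unfolding nilpotent_def by blast
  obtain x0 where x0: "x0 \<in> confs V A"
    using confs_nonempty[OF A] by blast
  have c: "c \<in> confs V A"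
    using kc x0 funpow_in_confs[OF f x0, of k] by simp
  have "f c = (f ^^ k) (f x0)"
    using kc x0 by (metis funpow_swap1)
  then have fixed: "f c = c"
    using kc x0 f unfolding is_fun_over_def by auto
  have stays: "(f ^^ m) c = c" for m
    by (induction m) (simp_all add: fixed)
  have "(f ^^ t) x = c" if "k \<le> t" "x \<in> confs V A" for t x
  proof -
    have "(f ^^ t) x = (f ^^ (t - k)) ((f ^^ k) x)"
      using \<open>k \<le> t\<close> by (metis funpow_add le_add_diff_inverse2 o_apply)
    also have "\<dots> = c"
      using kc that stays by simp
    finally show ?thesis .
  qed
  with c show ?thesis
    by blast
qed

lemma uniformly_eventually_constant:
  assumes fin: "finite \<I>" and A: "A \<noteq> {}" and nil: "\<forall>I\<in>\<I>. admits_nilpotent I A (H I)"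
  shows "\<exists>F C K. \<forall>I\<in>\<I>. admits I A (H I) (F I) \<and> C I \<in> confs I A
           \<and> (\<forall>t\<ge>K. \<forall>y\<in>confs I A. (F I ^^ t) y = C I)"
proof -
  have "\<forall>I\<in>\<I>. \<exists>f k c. admits I A (H I) f \<and> c \<in> confs I A \<and> (\<forall>t\<ge>k. \<forall>y\<in>confs I A. (f ^^ t) y = c)"
    using nil nilpotent_eventually_constant[OF _ _ A] unfolding admits_nilpotent_def admits_def by metis
  then obtain F k C where FkC: "\<forall>I\<in>\<I>. admits I A (H I) (F I) \<and> C I \<in> confs I A
      \<and> (\<forall>t\<ge>k I. \<forall>y\<in>confs I A. (F I ^^ t) y = C I)"
    by metis
  have "k I \<le> Max (k ` \<I>)" if "I \<in> \<I>" for I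
    using fin that by simp
  with FkC show ?thesis
    by (intro exI[of _ F] exI[of _ C] exI[of _ "Max (k ` \<I>)"]) force
qed

lemma funpow_settles_by_depth:
  assumes f: "is_fun_over V A f"
    and roots: "\<And>v t x. v \<in> V \<Longrightarrow> depth v = 0 \<Longrightarrow> K \<le> t \<Longrightarrow> x \<in> confs V A \<Longrightarrow> (f ^^ t) x v = c v"
    and parent: "\<And>v. v \<in> V \<Longrightarrow> depth v \<noteq> 0 \<Longrightarrow> parent v \<in> V \<and> depth v = Suc (depth (parent v))"
    and settles: "\<And>v y. v \<in> V \<Longrightarrow> depth v \<noteq> 0 \<Longrightarrow> y \<in> confs V A \<Longrightarrow> y (parent v) = c (parent v)
                     \<Longrightarrow> f y v = c v"
  shows "v \<in> V \<Longrightarrow> K + depth v \<le> t \<Longrightarrow> x \<in> confs V A \<Longrightarrow> (f ^^ t) x v = c v"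
proof (induction "depth v" arbitrary: v t)
  case 0
  then show ?case
    using roots by simp
next
  case (Suc m)
  then obtain t' where t: "t = Suc t'" "K + m \<le> t'"
    by (cases t) auto
  have "parent v \<in> V" "depth (parent v) = m"
    using parent[of v] Suc.hyps(2) Suc.prems(1) by auto
  then have "(f ^^ t') x (parent v) = c (parent v)"
    using Suc.hyps(1) Suc.prems(3) t(2) by blast
  with Suc.hyps(2) Suc.prems(1) show ?case
    using settles funpow_in_confs[OF f Suc.prems(3)] t(1) by simp
qed

section \<open>Initial strong components\<close>

lemma eq_extend_restrict_if_no_outside_arcs:
  assumes fin: "finite V" and I: "I \<subseteq> V" and z: "z \<in> A" and i: "i \<in> I"
    and none: "\<And>j. j \<in> V - I \<Longrightarrow> interaction_graph V A f (j, i) = None" and x: "x \<in> confs V A"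
  shows "f x i = f (extend_conf V I z (restrict x I)) i"
proof (rule eq_if_agree_on_in_neighbours[where I = I and A = A and f = f and i = i, OF fin])
  show "extend_conf V I z (restrict x I) \<in> confs V A"
    by (rule extend_conf_in_confs[OF I z restrict_in_confs[OF I x]])
qed (use i I x none in \<open>auto simp: extend_conf_def\<close>)

lemma interaction_graph_factor:
  assumes I: "I \<subseteq> V" and z: "z \<in> A" and graph: "interaction_graph V A f = G"
    and factor: "\<And>i x. i \<in> I \<Longrightarrow> x \<in> confs V A \<Longrightarrow> f x i = h (restrict x I) i"
  shows "interaction_graph I A h = induced G I"
proof (intro ext, clarify)
  fix j i
  show "interaction_graph I A h (j, i) = induced G I (j, i)"
  proof (cases "j \<in> I \<and> i \<in> I")
    case True
    then have "interaction_graph V A f (j, i) = interaction_graph I A h (j, i)"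
      using factor by (intro interaction_graph_restrict[OF I _ _ z]) auto
    with True graph show ?thesis
      by (simp add: induced_def)
  next
    case False
    then show ?thesis
      by (auto simp: induced_def interaction_graph_def)
  qed
qed

lemma admits_nilpotent_induced:
  assumes fin: "finite V" and z: "z \<in> A" and f: "admits V A G f" "nilpotent V A f"
    and I: "I \<subseteq> V" and initial: "\<forall>(u, v) \<in> arcs G. u \<notin> I \<longrightarrow> v \<notin> I"
  shows "admits_nilpotent I A (induced G I)"
proof -
  have fun_over: "is_fun_over V A f" and graph: "interaction_graph V A f = G"
    using f(1) unfolding admits_def by auto
  define h where "h y = restrict (f (extend_conf V I z y)) I" for y
  have factor: "f x i = h (restrict x I) i" if "i \<in> I" "x \<in> confs V A" for i x
    using eq_extend_restrict_if_no_outside_arcs[OF fin I z that(1) _ that(2)] that(1) initial graph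
    unfolding h_def arcs_def by auto
  then have h_restrict: "\<forall>x\<in>confs V A. restrict (f x) I = h (restrict x I)"
    unfolding h_def by (auto simp: restrict_def)
  have "is_fun_over I A h"
    using fun_over I z unfolding is_fun_over_def h_def
    by (auto intro: restrict_in_confs extend_conf_in_confs)
  moreover have "nilpotent I A h"
  proof -
    obtain k c where kc: "\<forall>x\<in>confs V A. (f ^^ k) x = c"
      using f(2) unfolding nilpotent_def by blast
    have "(h ^^ k) y = restrict c I" if "y \<in> confs I A" for y
      using restrict_funpow[OF fun_over h_restrict, of "extend_conf V I z y" k] kc that I z
      by (simp add: extend_conf_in_confs restrict_extend_conf)
    then show ?thesis
      unfolding nilpotent_def by blast
  qed
  ultimately show ?thesis
    using interaction_graph_factor[OF I z graph factor]
    unfolding admits_nilpotent_def admits_def by blast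
qed

definition scc_of :: "'v set \<Rightarrow> ('v \<times> 'v \<Rightarrow> sign option) \<Rightarrow> 'v \<Rightarrow> 'v set" where
  "scc_of V G v = {w \<in> V. (v, w) \<in> (arcs G)\<^sup>* \<and> (w, v) \<in> (arcs G)\<^sup>*}"

lemma scc_of_subset: "scc_of V G v \<subseteq> V"
  unfolding scc_of_def by auto

lemma scc_of_self: "v \<in> V \<Longrightarrow> v \<in> scc_of V G v"
  unfolding scc_of_def by auto

lemma strong_component_scc_of: "v \<in> V \<Longrightarrow> strong_component V G (scc_of V G v)"
  unfolding strong_component_def scc_of_def by auto

lemma strong_component_eq_scc_of:
  assumes "strong_component V G I" "v \<in> I"
  shows "I = scc_of V G v"
proof -
  obtain u where "I = scc_of V G u"
    using assms(1) unfolding strong_component_def scc_of_def by auto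
  with assms(2) show ?thesis
    unfolding scc_of_def by (auto intro: rtrancl_trans)
qed

lemma reachable_from_initial_component:
  assumes fin: "finite V" and G: "signed_digraph V G" and v: "v \<in> V"
  shows "\<exists>z\<in>V. initial_strong_component V G (scc_of V G z) \<and> (z, v) \<in> (arcs G)\<^sup>*"
proof -
  let ?R = "arcs G"
  define anc where "anc w = {u \<in> V. (u, w) \<in> ?R\<^sup>*}" for w
  obtain z where z: "z \<in> anc v" and least: "\<And>y. y \<in> anc v \<Longrightarrow> card (anc z) \<le> card (anc y)"
    using ex_has_least_nat[of "\<lambda>y. y \<in> anc v" v "\<lambda>y. card (anc y)"] v unfolding anc_def by auto
  then have zV: "z \<in> V" and zv: "(z, v) \<in> ?R\<^sup>*"
    unfolding anc_def by auto
  have "initial_strong_component V G (scc_of V G z)"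
    unfolding initial_strong_component_def
  proof (intro conjI strong_component_scc_of[OF zV] ballI, clarify)
    fix a b assume ab: "(a, b) \<in> ?R" and a: "a \<notin> scc_of V G z" and b: "b \<in> scc_of V G z"
    have aV: "a \<in> V"
      using ab G unfolding signed_digraph_def arcs_def by auto
    have az: "(a, z) \<in> ?R\<^sup>*"
      using ab b unfolding scc_of_def by (auto intro: converse_rtrancl_into_rtrancl)
    then have "anc a \<subseteq> anc z"
      unfolding anc_def by (auto intro: rtrancl_trans)
    moreover have "card (anc z) \<le> card (anc a)"
      using least aV az zv unfolding anc_def by (auto intro: rtrancl_trans)
    moreover have "finite (anc z)"
      using fin unfolding anc_def by auto
    ultimately have "anc a = anc z"
      by (intro card_seteq)
    with zV have "(z, a) \<in> ?R\<^sup>*"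
      unfolding anc_def by auto
    with a aV az show False
      unfolding scc_of_def by auto
  qed
  with zV zv show ?thesis
    by blast
qed

lemma exists_shortest_path_forest:
  assumes "\<forall>v\<in>V. \<exists>s\<in>S. (s, v) \<in> R\<^sup>*"
  shows "\<exists>depth parent. \<forall>v\<in>V. (depth v = 0 \<longleftrightarrow> v \<in> S)
           \<and> (v \<notin> S \<longrightarrow> (parent v, v) \<in> R \<and> depth v = Suc (depth (parent v)))"
proof -
  define depth where "depth v = (LEAST m. \<exists>s\<in>S. (s, v) \<in> R ^^ m)" for v
  have reached: "\<exists>s\<in>S. (s, v) \<in> R ^^ depth v" if "\<exists>m. \<exists>s\<in>S. (s, v) \<in> R ^^ m" for v
    unfolding depth_def using that by (rule LeastI_ex)
  have shortest: "depth v \<le> m" if "s \<in> S" "(s, v) \<in> R ^^ m" for s v m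
    unfolding depth_def using that by (auto intro: Least_le)
  have reachable: "\<exists>m. \<exists>s\<in>S. (s, v) \<in> R ^^ m" if "v \<in> V" for v
    using assms that unfolding rtrancl_power by blast
  have "\<exists>u. (u, v) \<in> R \<and> depth v = Suc (depth u)" if "v \<in> V" "v \<notin> S" for v
  proof -
    obtain s where s: "s \<in> S" "(s, v) \<in> R ^^ depth v"
      using reached[OF reachable[OF \<open>v \<in> V\<close>]] by blast
    with \<open>v \<notin> S\<close> obtain m where m: "depth v = Suc m"
      by (cases "depth v") auto
    with s obtain u where u: "(s, u) \<in> R ^^ m" "(u, v) \<in> R"
      by (auto elim: relpow_Suc_E)
    have "depth u \<le> m"
      using shortest[OF s(1) u(1)] .
    moreover obtain s' where "s' \<in> S" "(s', u) \<in> R ^^ depth u"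
      using reached s(1) u(1) by blast
    with u(2) have "depth v \<le> Suc (depth u)"
      by (intro shortest[of s']) auto
    ultimately show ?thesis
      using m u(2) by (intro exI[of _ u]) auto
  qed
  then obtain parent where "\<And>v. v \<in> V \<Longrightarrow> v \<notin> S \<Longrightarrow> (parent v, v) \<in> R \<and> depth v = Suc (depth (parent v))"
    by metis
  moreover have "depth v = 0 \<longleftrightarrow> v \<in> S" if "v \<in> V" for v
    using shortest[of v v 0] reached[OF reachable[OF that]] by auto
  ultimately show ?thesis
    by blast
qed

section \<open>Gluing nilpotent functions along a forest\<close>

fun propagate :: "('v \<Rightarrow> 'v) \<Rightarrow> ('v \<Rightarrow> int) \<Rightarrow> ('v \<Rightarrow> int \<Rightarrow> int) \<Rightarrow> nat \<Rightarrow> 'v \<Rightarrow> int" where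
  "propagate parent root f 0 v = root v"
| "propagate parent root f (Suc m) v = f v (propagate parent root f m (parent v))"

locale gated_extension =
  fixes V :: "'v set" and G :: "'v \<times> 'v \<Rightarrow> sign option" and lo hi :: int
    and F :: "'v set \<Rightarrow> ('v \<Rightarrow> int) \<Rightarrow> 'v \<Rightarrow> int" and C :: "'v set \<Rightarrow> 'v \<Rightarrow> int" and K :: nat
    and depth :: "'v \<Rightarrow> nat" and parent :: "'v \<Rightarrow> 'v"
  assumes finite_V: "finite V" and digraph: "signed_digraph V G" and lo_less_hi: "lo < hi"
    and components: "\<And>I. initial_strong_component V G I \<Longrightarrow>
        admits I {lo..hi} (induced G I) (F I) \<and> C I \<in> confs I {lo..hi}
        \<and> (\<forall>t\<ge>K. \<forall>y\<in>confs I {lo..hi}. (F I ^^ t) y = C I)"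
    and root_iff: "\<And>v. v \<in> V \<Longrightarrow> depth v = 0 \<longleftrightarrow> initial_strong_component V G (scc_of V G v)"
    and parent: "\<And>v. v \<in> V \<Longrightarrow> depth v \<noteq> 0 \<Longrightarrow> (parent v, v) \<in> arcs G \<and> depth v = Suc (depth (parent v))"
    and null_arcs: "\<And>w v. G (w, v) = Some Null \<Longrightarrow> v \<in> V \<Longrightarrow> depth v \<noteq> 0 \<Longrightarrow> lo + 1 < hi"
begin

lemma parent_in_V: "v \<in> V \<Longrightarrow> depth v \<noteq> 0 \<Longrightarrow> parent v \<in> V"
  using parent digraph unfolding signed_digraph_def arcs_def by blast

lemma root_component:
  assumes "v \<in> V" "depth v = 0"
  shows "initial_strong_component V G (scc_of V G v)"
    and "\<And>w. w \<in> scc_of V G v \<Longrightarrow> scc_of V G w = scc_of V G v \<and> depth w = 0"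
proof -
  show initial: "initial_strong_component V G (scc_of V G v)"
    using assms root_iff by blast
  fix w assume w: "w \<in> scc_of V G v"
  then have "scc_of V G w = scc_of V G v"
    using initial strong_component_eq_scc_of unfolding initial_strong_component_def by metis
  moreover have "w \<in> V"
    using w scc_of_subset[of V G v] by blast
  ultimately show "scc_of V G w = scc_of V G v \<and> depth w = 0"
    using initial root_iff[of w] by simp
qed

definition gate_up :: "'v \<Rightarrow> int \<Rightarrow> bool" where
  "gate_up v e \<longleftrightarrow> (the (G (parent v, v)) = Pos) = (e < hi)"

text \<open>The value on which \<open>v\<close> settles: the constant of its component at a root, the output of
  a failing gate elsewhere.\<close>

definition target :: "'v \<Rightarrow> int" where
  "target v =
     propagate parent (\<lambda>v. C (scc_of V G v) v) (\<lambda>v e. if gate_up v e then lo else hi) (depth v) v"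

lemma target_root: "depth v = 0 \<Longrightarrow> target v = C (scc_of V G v) v"
  unfolding target_def by simp

lemma target_step:
  assumes "v \<in> V" "depth v \<noteq> 0"
  shows "target v = (if gate_up v (target (parent v)) then lo else hi)"
proof -
  have "depth v = Suc (depth (parent v))"
    using parent[OF assms] by blast
  then show ?thesis
    unfolding target_def by (simp only: propagate.simps)
qed

lemma target_in_interval:
  assumes "v \<in> V"
  shows "target v \<in> {lo..hi}"
proof (cases "depth v = 0")
  case True
  then have "C (scc_of V G v) \<in> confs (scc_of V G v) {lo..hi}"
    using components[OF root_component(1)[OF assms True]] by blast
  from confs_mem[OF this scc_of_self[OF assms]] True show ?thesis
    by (simp add: target_root)
next
  case False
  with assms lo_less_hi show ?thesis
    by (simp add: target_step)
qed

definition step :: "('v \<Rightarrow> int) \<Rightarrow> 'v \<Rightarrow> int" where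
  "step x v =
     (if v \<notin> V then undefined
      else if depth v = 0 then F (scc_of V G v) (restrict x (scc_of V G v)) v
      else gate lo hi G v (gate_up v (target (parent v))) (target (parent v)) x)"

lemma component_step_in_confs:
  assumes "v \<in> V" "depth v = 0" "x \<in> confs V {lo..hi}"
  shows "F (scc_of V G v) (restrict x (scc_of V G v)) \<in> confs (scc_of V G v) {lo..hi}"
proof -
  have "is_fun_over (scc_of V G v) {lo..hi} (F (scc_of V G v))"
    using components[OF root_component(1)[OF assms(1,2)]] unfolding admits_def by blast
  with restrict_in_confs[OF scc_of_subset assms(3)] show ?thesis
    unfolding is_fun_over_def by blast
qed

lemma step_fun_over: "is_fun_over V {lo..hi} step"
  unfolding is_fun_over_def
proof
  fix x assume x: "x \<in> confs V {lo..hi}"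
  have "step x v \<in> {lo..hi}" if v: "v \<in> V" for v
  proof (cases "depth v = 0")
    case True
    from confs_mem[OF component_step_in_confs[OF v True x] scc_of_self[OF v]] True v show ?thesis
      by (simp add: step_def)
  next
    case False
    with v lo_less_hi show ?thesis
      unfolding step_def gate_def by auto
  qed
  then show "step x \<in> confs V {lo..hi}"
    unfolding confs_def step_def by (auto simp: PiE_iff extensional_def)
qed

lemma step_root:
  assumes "v \<in> V" "depth v = 0" "i \<in> scc_of V G v"
  shows "step x i = F (scc_of V G v) (restrict x (scc_of V G v)) i"
  using assms root_component(2)[OF assms(1,2)] scc_of_subset[of V G v] unfolding step_def by auto

lemma restrict_step_root:
  assumes "v \<in> V" "depth v = 0"
  shows "\<forall>x\<in>confs V {lo..hi}.
           restrict (step x) (scc_of V G v) = F (scc_of V G v) (restrict x (scc_of V G v))"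
  using component_step_in_confs[OF assms] step_root[OF assms]
  unfolding confs_def by (auto simp: PiE_iff extensional_def)

lemma interaction_graph_step: "interaction_graph V {lo..hi} step = G"
proof (intro ext, clarify)
  fix j i
  show "interaction_graph V {lo..hi} step (j, i) = G (j, i)"
  proof (cases "i \<in> V")
    case False
    with digraph have "G (j, i) = None"
      unfolding signed_digraph_def by blast
    with False show ?thesis
      by (simp add: interaction_graph_def)
  next
    case i: True
    show ?thesis
    proof (cases "depth i = 0")
      case True
      let ?I = "scc_of V G i"
      have initial: "initial_strong_component V G ?I"
        using root_component(1)[OF i True] .
      have I: "?I \<subseteq> V" "i \<in> ?I"
        using scc_of_subset[of V G i] scc_of_self[OF i] by blast+
      show ?thesis
      proof (rule interaction_graph_initial_component[OF I, where z = lo and h = "F ?I"])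
        show "lo \<in> {lo..hi}"
          using lo_less_hi by simp
        show "\<forall>x\<in>confs V {lo..hi}. step x i = F ?I (restrict x ?I) i"
          using step_root[OF i True I(2)] by blast
        show "interaction_graph ?I {lo..hi} (F ?I) = induced G ?I"
          using components[OF initial] unfolding admits_def by blast
        show "\<forall>(u, v) \<in> arcs G. u \<notin> ?I \<longrightarrow> v \<notin> ?I"
          using initial unfolding initial_strong_component_def by blast
      qed
    next
      case False
      let ?e = "target (parent i)"
      show ?thesis
      proof (rule interaction_graph_gate[where up = "gate_up i ?e"])
        show "\<forall>x\<in>confs V {lo..hi}. step x i = gate lo hi G i (gate_up i ?e) ?e x"
          using i False by (simp add: step_def)
      qed (use lo_less_hi target_in_interval[OF parent_in_V[OF i False]] digraph i null_arcs[OF _ i False] in auto)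
    qed
  qed
qed

lemma step_settles:
  assumes v: "v \<in> V" "depth v \<noteq> 0" and settled: "y (parent v) = target (parent v)"
  shows "step y v = target v"
proof -
  let ?s = "the (G (parent v, v))" and ?e = "target (parent v)"
  have arc: "G (parent v, v) \<noteq> None"
    using parent[OF v] unfolding arcs_def by auto
  have fails: "\<not> arc_test lo hi ?s ((?s = Pos) = (?e < hi)) ?e ?e"
    using lo_less_hi target_in_interval[OF parent_in_V[OF v]] null_arcs[OF _ v] arc
    by (intro arc_test_fails_at_parent) auto
  define passes where "passes \<longleftrightarrow>
    (\<forall>w\<in>{w. G (w, v) \<noteq> None}. arc_test lo hi (the (G (w, v))) (gate_up v ?e) ?e (y w))"
  have "\<not> passes"
  proof
    assume passes
    with arc have "arc_test lo hi ?s (gate_up v ?e) ?e (y (parent v))"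
      unfolding passes_def by blast
    with fails settled show False
      unfolding gate_up_def by simp
  qed
  moreover have "step y v = (if passes = gate_up v ?e then hi else lo)"
    using v unfolding step_def gate_def passes_def by simp
  ultimately show ?thesis
    using v by (simp add: target_step)
qed

lemma step_settles_at_roots:
  assumes v: "v \<in> V" "depth v = 0" and t: "K \<le> t" and x: "x \<in> confs V {lo..hi}"
  shows "(step ^^ t) x v = target v"
proof -
  let ?I = "scc_of V G v"
  have "restrict ((step ^^ t) x) ?I = (F ?I ^^ t) (restrict x ?I)"
    using restrict_funpow[OF step_fun_over restrict_step_root[OF v] x] .
  also have "\<dots> = C ?I"
    using components[OF root_component(1)[OF v]] t restrict_in_confs[OF scc_of_subset x] by blast
  finally have "restrict ((step ^^ t) x) ?I v = C ?I v"
    by simp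
  with v show ?thesis
    by (simp add: scc_of_self target_root)
qed

lemma step_nilpotent: "nilpotent V {lo..hi} step"
proof -
  have parent_step: "parent v \<in> V \<and> depth v = Suc (depth (parent v))" if "v \<in> V" "depth v \<noteq> 0" for v
    using parent_in_V[OF that] parent[OF that] by blast
  have settles: "(step ^^ t) x v = target v" if "v \<in> V" "K + depth v \<le> t" "x \<in> confs V {lo..hi}" for v t x
    using funpow_settles_by_depth[OF step_fun_over step_settles_at_roots parent_step step_settles that] .
  have "(step ^^ (K + Max (depth ` V))) x = restrict target V" if x: "x \<in> confs V {lo..hi}" for x
  proof (rule confs_ext)
    show "(step ^^ (K + Max (depth ` V))) x \<in> confs V {lo..hi}"
      by (rule funpow_in_confs[OF step_fun_over x])
    show "restrict target V \<in> confs V {lo..hi}"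
      using target_in_interval unfolding confs_def by simp
    fix v assume "v \<in> V"
    moreover have "depth v \<le> Max (depth ` V)"
      using finite_V \<open>v \<in> V\<close> by simp
    ultimately show "(step ^^ (K + Max (depth ` V))) x v = restrict target V v"
      using settles[OF _ _ x] by simp
  qed
  then show ?thesis
    unfolding nilpotent_def by blast
qed

end

lemma initial_components_uniformly_nilpotent:
  assumes fin: "finite V" and A: "A \<noteq> {}"
    and comps: "\<forall>I. initial_strong_component V G I \<longrightarrow> admits_nilpotent I A (induced G I)"
  shows "\<exists>F C K. \<forall>I. initial_strong_component V G I \<longrightarrow> admits I A (induced G I) (F I)
           \<and> C I \<in> confs I A \<and> (\<forall>t\<ge>K. \<forall>y\<in>confs I A. (F I ^^ t) y = C I)"
proof -
  have "{I. initial_strong_component V G I} \<subseteq> Pow V"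
    unfolding initial_strong_component_def strong_component_def by auto
  with fin have "finite {I. initial_strong_component V G I}"
    by (meson finite_Pow_iff finite_subset)
  from uniformly_eventually_constant[OF this A] comps show ?thesis
    by simp
qed

lemma exists_forest_from_initial_components:
  assumes fin: "finite V" and G: "signed_digraph V G"
  shows "\<exists>depth parent. \<forall>v\<in>V. (depth v = 0 \<longleftrightarrow> initial_strong_component V G (scc_of V G v))
           \<and> (depth v \<noteq> 0 \<longrightarrow> (parent v, v) \<in> arcs G \<and> depth v = Suc (depth (parent v)))"
proof -
  let ?S = "{v \<in> V. initial_strong_component V G (scc_of V G v)}"
  have "\<forall>v\<in>V. \<exists>s\<in>?S. (s, v) \<in> (arcs G)\<^sup>*"
  proof
    fix v assume "v \<in> V"
    from reachable_from_initial_component[OF fin G this] show "\<exists>s\<in>?S. (s, v) \<in> (arcs G)\<^sup>*"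
      by blast
  qed
  from exists_shortest_path_forest[OF this] obtain depth parent
    where "\<forall>v\<in>V. (depth v = 0 \<longleftrightarrow> v \<in> ?S)
      \<and> (v \<notin> ?S \<longrightarrow> (parent v, v) \<in> arcs G \<and> depth v = Suc (depth (parent v)))"
    by blast
  then show ?thesis
    by (intro exI[of _ depth] exI[of _ parent]) auto
qed

lemma admits_nilpotent_from_initial_components:
  fixes V :: "'v set"
  assumes fin: "finite V" and G: "signed_digraph V G" and lo_hi: "lo < hi"
    and comps: "\<forall>I. initial_strong_component V G I \<longrightarrow> admits_nilpotent I {lo..hi} (induced G I)"
    and nulls: "\<forall>j i. G (j, i) = Some Null \<longrightarrow>
                  lo + 1 < hi \<or> (\<exists>I. initial_strong_component V G I \<and> j \<in> I \<and> i \<in> I)"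
  shows "admits_nilpotent V {lo..hi} G"
proof -
  obtain F C K where components: "\<And>I. initial_strong_component V G I \<Longrightarrow>
      admits I {lo..hi} (induced G I) (F I) \<and> C I \<in> confs I {lo..hi}
      \<and> (\<forall>t\<ge>K. \<forall>y\<in>confs I {lo..hi}. (F I ^^ t) y = C I)"
    using initial_components_uniformly_nilpotent[OF fin _ comps] lo_hi by fastforce
  obtain depth parent where forest: "\<forall>v\<in>V. (depth v = 0 \<longleftrightarrow> initial_strong_component V G (scc_of V G v))
      \<and> (depth v \<noteq> 0 \<longrightarrow> (parent v, v) \<in> arcs G \<and> depth v = Suc (depth (parent v)))"
    using exists_forest_from_initial_components[OF fin G] by blast
  have null_arcs: "lo + 1 < hi" if "G (w, v) = Some Null" "v \<in> V" "depth v \<noteq> 0" for w v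
  proof (rule ccontr)
    assume "\<not> lo + 1 < hi"
    with nulls that(1) obtain I where I: "initial_strong_component V G I" "v \<in> I"
      by blast
    have "I = scc_of V G v"
      by (rule strong_component_eq_scc_of) (use I in \<open>auto simp: initial_strong_component_def\<close>)
    with I bspec[OF forest that(2)] that(3) show False
      by simp
  qed
  interpret gated_extension V G lo hi F C K depth parent
  proof
    show "depth v = 0 \<longleftrightarrow> initial_strong_component V G (scc_of V G v)" if "v \<in> V" for v
      using bspec[OF forest that] by blast
    show "(parent v, v) \<in> arcs G \<and> depth v = Suc (depth (parent v))" if "v \<in> V" "depth v \<noteq> 0" for v
      using bspec[OF forest that(1)] that(2) by blast
  qed (use fin G lo_hi components null_arcs in auto)
  show ?thesis
    unfolding admits_nilpotent_def admits_def
    using step_fun_over interaction_graph_step step_nilpotent by blast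
qed

theorem proposition3:
  fixes n :: nat and lo hi :: int and G :: "nat \<times> nat \<Rightarrow> sign option"
  assumes "lo \<le> hi"
    and "signed_digraph {1..n} G"
  shows "(admits_nilpotent {1..n} {lo..hi} G \<longrightarrow>
            (\<forall>I. initial_strong_component {1..n} G I \<longrightarrow>
                 admits_nilpotent I {lo..hi} (induced G I)))
       \<and> (((\<forall>I. initial_strong_component {1..n} G I \<longrightarrow>
                 admits_nilpotent I {lo..hi} (induced G I))
            \<and> (card {lo..hi} \<ge> 3 \<or>
               (card {lo..hi} = 2 \<and>
                (\<forall>j i. G (j, i) = Some Null \<longrightarrow>
                   (\<exists>I. initial_strong_component {1..n} G I \<and> j \<in> I \<and> i \<in> I)))))
          \<longrightarrow> admits_nilpotent {1..n} {lo..hi} G)"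
proof (intro conjI impI allI)
  fix I assume "admits_nilpotent {1..n} {lo..hi} G" and I: "initial_strong_component {1..n} G I"
  then obtain f where f: "admits {1..n} {lo..hi} G f" "nilpotent {1..n} {lo..hi} f"
    unfolding admits_nilpotent_def by blast
  have "I \<subseteq> {1..n}"
    using I unfolding initial_strong_component_def strong_component_def by auto
  with I assms(1) show "admits_nilpotent I {lo..hi} (induced G I)"
    unfolding initial_strong_component_def
    by (intro admits_nilpotent_induced[OF finite_atLeastAtMost _ f]) auto
next
  assume H: "(\<forall>I. initial_strong_component {1..n} G I \<longrightarrow> admits_nilpotent I {lo..hi} (induced G I))
    \<and> (3 \<le> card {lo..hi} \<or> card {lo..hi} = 2 \<and>
       (\<forall>j i. G (j, i) = Some Null \<longrightarrow> (\<exists>I. initial_strong_component {1..n} G I \<and> j \<in> I \<and> i \<in> I)))"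
  then have "lo < hi" and "\<forall>j i. G (j, i) = Some Null \<longrightarrow>
      lo + 1 < hi \<or> (\<exists>I. initial_strong_component {1..n} G I \<and> j \<in> I \<and> i \<in> I)"
    by auto
  with H assms(2) show "admits_nilpotent {1..n} {lo..hi} G"
    by (intro admits_nilpotent_from_initial_components) auto
qed

end
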